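(* Let $Y_1,\dots,Y_n$ be integer-valued random variables (with arbitrary dependence) with finite means, and let $W:=\sum_{i=1}^n Y_i$. Let $(a_i)_{i=1}^n$ and $(b_i)_{i=1}^n$ be real numbers such that, for every bounded $f:\mathbb{Z}\to\mathbb{R}$ and every $1\le i\le n$, \[ \bigl|\mathbb{E}[Y_if(W)]-\mathbb{E}[Y_i]\,\mathbb{E}f(W)-a_i\,\mathbb{E}[\Delta f(W)]\bigr|\le b_i\|\Delta f\|. \] Let $\sigma^2:=\sum_{i=1}^n a_i$, assumed positive, let $\delta:=\mathbb{E}W-\sigma^2-\lfloor\mathbb{E}W-\sigma^2\rfloor$ and $\lambda':=\sigma^2+\delta$. Then \[ \|\mathcal{L}(W)-\mathrm{TP}(\mathbb{E}W,\sigma^2)\|\le 2(\lambda')^{-1}\Bigl(\delta+\sum_{i=1}^n b_i\Bigr)+2\,\mathbb{P}[W<\mathbb{E}W-\sigma^2]. \]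
   Context: $\Delta f(j):=f(j+1)-f(j)$ and, for bounded $g:\mathbb{Z}\to\mathbb{R}$, $\|g\|:=\sup_j|g(j)|$. $\mathcal{L}(W)$ denotes the law of $W$. For $\mu\in\mathbb{R}$, $\sigma^2\ge0$: $\gamma(\mu,\sigma^2):=\lfloor\mu-\sigma^2\rfloor$, $\delta(\mu,\sigma^2):=\mu-\sigma^2-\gamma(\mu,\sigma^2)$, $\lambda'(\mu,\sigma^2):=\sigma^2+\delta(\mu,\sigma^2)$, and the translated Poisson distribution $\mathrm{TP}(\mu,\sigma^2)$ on $\mathbb{Z}$ is $\mathrm{TP}(\mu,\sigma^2)\{j\}:=\mathrm{Po}(\lambda'(\mu,\sigma^2))\{j-\gamma(\mu,\sigma^2)\}$, with $\mathrm{Po}(\lambda)$ the Poisson law with mean $\lambda$. For probability measures $Q,Q'$ on $\mathbb{Z}$, $\|Q-Q'\|:=\sum_{i\in\mathbb{Z}}|Q(i)-Q'(i)|$. *)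

theory Defs
  imports "HOL-Probability.Probability"
begin

definition poisson_pt :: "real \<Rightarrow> int \<Rightarrow> real" where
  "poisson_pt lam k = (if k < 0 then 0 else lam ^ nat k / fact (nat k) * exp (- lam))"

definition tp_gamma :: "real \<Rightarrow> real \<Rightarrow> int" where
  "tp_gamma mu s2 = \<lfloor>mu - s2\<rfloor>"

definition tp_delta :: "real \<Rightarrow> real \<Rightarrow> real" where
  "tp_delta mu s2 = mu - s2 - real_of_int (tp_gamma mu s2)"

definition tp_lambda :: "real \<Rightarrow> real \<Rightarrow> real" where
  "tp_lambda mu s2 = s2 + tp_delta mu s2"

definition TP :: "real \<Rightarrow> real \<Rightarrow> int \<Rightarrow> real" where
  "TP mu s2 j = poisson_pt (tp_lambda mu s2) (j - tp_gamma mu s2)"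

definition fdiff :: "(int \<Rightarrow> real) \<Rightarrow> int \<Rightarrow> real" where
  "fdiff f j = f (j + 1) - f j"

definition supnorm :: "(int \<Rightarrow> real) \<Rightarrow> real" where
  "supnorm g = (SUP j. \<bar>g j\<bar>)"

definition bounded_fun :: "(int \<Rightarrow> real) \<Rightarrow> bool" where
  "bounded_fun f \<longleftrightarrow> (\<exists>B. \<forall>j. \<bar>f j\<bar> \<le> B)"

end

theory Submission
  imports Defs
begin

text \<open>
  Stein's method for the Poisson law \<open>Po(\<lambda>')\<close> shifted by \<open>\<gamma> = \<lfloor>EW - \<sigma>\<^sup>2\<rfloor>\<close>, so that
  \<open>EW = \<lambda>' + \<gamma>\<close>. For \<open>0 \<le> h \<le> 1\<close> the solution \<open>f\<close> of the shifted Stein equation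
  \<open>\<lambda>' f (j + 1) - (j - \<gamma>) f j = h j - TP h\<close> (for \<open>j \<ge> \<gamma>\<close>) is bounded with \<open>\<parallel>\<Delta>f\<parallel> \<le> 1/\<lambda>'\<close>.
  Taking expectations at \<open>W\<close> and summing the hypothesis over \<open>i\<close>, the term \<open>E[W f(W)]\<close>
  becomes \<open>EW E f(W) + \<sigma>\<^sup>2 E \<Delta>f(W)\<close> up to \<open>(\<Sum> b\<^sub>i) \<parallel>\<Delta>f\<parallel>\<close>, so \<open>E h(W) - TP h\<close> is at most
  \<open>\<delta> E \<Delta>f(W)\<close> plus that error plus \<open>P[W < \<gamma>]\<close>, where the equation is not imposed. Taking
  \<open>h\<close> the indicator of \<open>{j. TP{j} \<le> P[W = j]}\<close> turns this into the total variation bound.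
\<close>

definition poisson_nat :: "real \<Rightarrow> nat \<Rightarrow> real" where
  "poisson_nat L k = L ^ k / fact k * exp (- L)"

lemma poisson_nat_pos: "L > 0 \<Longrightarrow> poisson_nat L k > 0"
  by (simp add: poisson_nat_def)

lemma poisson_nat_nonneg: "L \<ge> 0 \<Longrightarrow> poisson_nat L k \<ge> 0"
  by (simp add: poisson_nat_def)

lemma poisson_nat_Suc: "real (Suc k) * poisson_nat L (Suc k) = L * poisson_nat L k"
  unfolding poisson_nat_def fact_Suc by (simp add: field_simps del: of_nat_Suc)

lemma poisson_nat_sums: "poisson_nat L sums 1"
proof -
  have "(\<lambda>k. L ^ k /\<^sub>R fact k * exp (- L)) sums (exp L * exp (- L))"
    by (rule sums_mult2[OF exp_converges])
  moreover have "(\<lambda>k. L ^ k /\<^sub>R fact k * exp (- L)) = poisson_nat L"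
    by (simp add: poisson_nat_def divide_inverse fun_eq_iff)
  ultimately show ?thesis
    by (simp add: exp_minus)
qed

lemma summable_poisson_nat: "summable (poisson_nat L)"
  using poisson_nat_sums sums_summable by blast

lemma suminf_poisson_nat: "(\<Sum>k. poisson_nat L k) = 1"
  using poisson_nat_sums sums_unique by metis

lemma poisson_pt_of_nat: "poisson_pt L (int k) = poisson_nat L k"
  by (simp add: poisson_pt_def poisson_nat_def)

definition poisson_expect :: "real \<Rightarrow> (nat \<Rightarrow> real) \<Rightarrow> real" where
  "poisson_expect L H = (\<Sum>k. poisson_nat L k * H k)"

definition poisson_cdf :: "real \<Rightarrow> nat \<Rightarrow> real" where
  "poisson_cdf L k = (\<Sum>i\<le>k. poisson_nat L i)"

definition poisson_tail :: "real \<Rightarrow> nat \<Rightarrow> real" where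
  "poisson_tail L k = (\<Sum>m. poisson_nat L (m + Suc k))"

definition poisson_partial_expect :: "real \<Rightarrow> (nat \<Rightarrow> real) \<Rightarrow> nat \<Rightarrow> real" where
  "poisson_partial_expect L H k = (\<Sum>i\<le>k. poisson_nat L i * H i)"

definition poisson_tail_expect :: "real \<Rightarrow> (nat \<Rightarrow> real) \<Rightarrow> nat \<Rightarrow> real" where
  "poisson_tail_expect L H k = (\<Sum>m. poisson_nat L (m + Suc k) * H (m + Suc k))"

text \<open>
  \<open>stein_sol L H k\<close> is \<open>g (k + 1)\<close> for the solution \<open>g\<close> of the Poisson Stein equation
  \<open>L g (k + 1) - k g k = H k - E H(X)\<close>, \<open>X ~ Po(L)\<close>, normalised by \<open>g 0 = 0\<close>.
\<close>
definition stein_sol :: "real \<Rightarrow> (nat \<Rightarrow> real) \<Rightarrow> nat \<Rightarrow> real" where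
  "stein_sol L H k =
     (poisson_partial_expect L H k - poisson_expect L H * poisson_cdf L k) / (L * poisson_nat L k)"

lemma abs_linear_form_on_box_le:
  fixes \<alpha> \<beta> \<tau> T a u x y t :: real
  assumes "\<alpha> \<le> 0" "\<beta> \<le> 0" "0 \<le> \<tau>" "\<tau> \<le> T" "\<alpha> * a + \<beta> * u = - \<tau>"
    and "0 \<le> x" "x \<le> a" "0 \<le> y" "y \<le> u" "0 \<le> t" "t \<le> 1"
  shows "\<bar>\<alpha> * x + \<beta> * y + \<tau> * t\<bar> \<le> T"
proof -
  have "\<alpha> * a \<le> \<alpha> * x" "\<alpha> * x \<le> 0" "\<beta> * u \<le> \<beta> * y" "\<beta> * y \<le> 0"
    using assms by (simp_all add: mult_left_mono_neg mult_nonpos_nonneg)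
  moreover have "0 \<le> \<tau> * t" "\<tau> * t \<le> \<tau>"
    using assms by (simp_all add: mult_left_le)
  ultimately show ?thesis
    using assms by linarith
qed

text \<open>
  For \<open>X ~ Po(L)\<close> this is the bound on \<open>stein_sol L H (j + 1) - stein_sol L H j\<close>, with
  \<open>x = E[H X; X \<le> j]\<close>, \<open>t = H (j + 1)\<close>, \<open>y = E[H X; X > j + 1]\<close>, \<open>a = P[X \<le> j]\<close>,
  \<open>p = P[X = j + 1]\<close>, \<open>p' = P[X = j]\<close>, \<open>u = P[X > j + 1]\<close>, \<open>k = j + 1\<close>.
  The increment is linear in \<open>(x, y, t)\<close>, and the Poisson inequalities \<open>tail\<close> and \<open>cdf\<close>
  give its coefficients the signs required by \<open>abs_linear_form_on_box_le\<close>.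
\<close>
lemma stein_increment_bound:
  fixes L k p p' a u x y t c :: real
  assumes L: "L > 0" and k: "k > 0" and p: "p > 0" and p': "L * p' = k * p"
    and a: "a \<ge> 0" and u: "u \<ge> 0"
    and tail: "k * u \<le> L * (u + p)" and cdf: "L * a \<le> k * (a + p)"
    and box: "0 \<le> x" "x \<le> a" "0 \<le> y" "y \<le> u" "0 \<le> t" "t \<le> 1"
    and c: "c = x + p * t + y" and total: "a + p + u = 1"
  shows "\<bar>(x + p * t - c * (a + p)) / (L * p) - (x - c * a) / (L * p')\<bar> \<le> 1 / L"
proof -
  define \<alpha> where "\<alpha> = u / (L * p) - (u + p) / (k * p)"
  define \<beta> where "\<beta> = a / (k * p) - (a + p) / (L * p)"
  define \<tau> where "\<tau> = u / L + a / k"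
  have "(x + p * t - c * (a + p)) / (L * p) - (x - c * a) / (L * p') = \<alpha> * x + \<beta> * y + \<tau> * t"
  proof -
    have u_eq: "u = 1 - a - p" using total by simp
    have "(x + p * t - c * (a + p)) / (L * p) - (x - c * a) / (L * p')
        = ((x + p * t) * u - y * (a + p)) / (L * p) - (x * (u + p) - (y + p * t) * a) / (k * p)"
      unfolding c u_eq p' by (simp add: algebra_simps)
    also have "\<dots> = \<alpha> * x + \<beta> * y + \<tau> * t"
      using L k p unfolding \<alpha>_def \<beta>_def \<tau>_def by (simp add: field_simps)
    finally show ?thesis .
  qed
  moreover have "\<bar>\<alpha> * x + \<beta> * y + \<tau> * t\<bar> \<le> 1 / L"
  proof (rule abs_linear_form_on_box_le[OF _ _ _ _ _ box])
    have "k * u / (L * k * p) \<le> L * (u + p) / (L * k * p)"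
      using tail L k p by (intro divide_right_mono) auto
    then show "\<alpha> \<le> 0"
      using L k unfolding \<alpha>_def by simp
    have "L * a / (L * k * p) \<le> k * (a + p) / (L * k * p)"
      using cdf L k p by (intro divide_right_mono) auto
    then show "\<beta> \<le> 0"
      using L k unfolding \<beta>_def by simp
    show "0 \<le> \<tau>"
      using L k a u unfolding \<tau>_def by simp
    have "L * a / (L * k) \<le> k * (a + p) / (L * k)"
      using cdf L k by (intro divide_right_mono) auto
    then have "a / k \<le> (a + p) / L"
      using L k by simp
    moreover have "u / L + (a + p) / L = 1 / L"
      using total by (simp add: add_divide_distrib[symmetric] add_ac)
    ultimately show "\<tau> \<le> 1 / L"
      unfolding \<tau>_def by linarith
    show "\<alpha> * a + \<beta> * u = - \<tau>"
      using L k p unfolding \<alpha>_def \<beta>_def \<tau>_def by (simp add: field_simps)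
  qed
  ultimately show ?thesis
    by simp
qed

context
  fixes L :: real and H :: "nat \<Rightarrow> real"
  assumes L: "L > 0" and H_nonneg: "\<And>i. 0 \<le> H i" and H_le_1: "\<And>i. H i \<le> 1"
begin

lemma poisson_weighted_bounds: "0 \<le> poisson_nat L i * H i" "poisson_nat L i * H i \<le> poisson_nat L i"
  using poisson_nat_nonneg[of L i] L H_nonneg[of i] H_le_1[of i] by (auto simp: mult_left_le)

lemma summable_poisson_weighted: "summable (\<lambda>i. poisson_nat L i * H i)"
  by (rule summable_comparison_test'[OF summable_poisson_nat[of L], where N = 0])
    (use poisson_weighted_bounds in auto)

lemma poisson_expect_split: "poisson_expect L H = poisson_partial_expect L H k + poisson_tail_expect L H k"
  unfolding poisson_expect_def poisson_partial_expect_def poisson_tail_expect_def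
  using suminf_split_initial_segment[OF summable_poisson_weighted, of "Suc k"]
  by (simp add: lessThan_Suc_atMost)

lemma poisson_total_split: "poisson_cdf L k + poisson_tail L k = 1"
  unfolding poisson_cdf_def poisson_tail_def
  using suminf_split_initial_segment[OF summable_poisson_nat[of L], of "Suc k"] suminf_poisson_nat[of L]
  by (simp add: lessThan_Suc_atMost)

lemma poisson_tail_expect_bounds: "0 \<le> poisson_tail_expect L H k" "poisson_tail_expect L H k \<le> poisson_tail L k"
proof -
  have "summable (\<lambda>m. poisson_nat L (m + Suc k) * H (m + Suc k))"
    using summable_ignore_initial_segment[OF summable_poisson_weighted, of "Suc k"] by simp
  moreover have "summable (\<lambda>m. poisson_nat L (m + Suc k))"
    using summable_ignore_initial_segment[OF summable_poisson_nat[of L], of "Suc k"] by simp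
  ultimately show "0 \<le> poisson_tail_expect L H k" "poisson_tail_expect L H k \<le> poisson_tail L k"
    unfolding poisson_tail_expect_def poisson_tail_def
    by (auto intro!: suminf_nonneg suminf_le poisson_weighted_bounds)
qed

lemma poisson_partial_expect_bounds:
  "0 \<le> poisson_partial_expect L H k" "poisson_partial_expect L H k \<le> poisson_cdf L k"
  unfolding poisson_partial_expect_def poisson_cdf_def
  by (auto intro!: sum_nonneg sum_mono poisson_weighted_bounds)

lemma poisson_tail_nonneg: "0 \<le> poisson_tail L k"
  using poisson_tail_expect_bounds by (meson order_trans)

lemma poisson_cdf_bounds: "0 \<le> poisson_cdf L k" "poisson_cdf L k \<le> 1"
  using poisson_partial_expect_bounds[of k] poisson_total_split[of k] poisson_tail_nonneg[of k]
  by linarith+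

lemma poisson_expect_bounds: "0 \<le> poisson_expect L H" "poisson_expect L H \<le> 1"
  using poisson_expect_split[of 0] poisson_tail_expect_bounds[of 0] poisson_partial_expect_bounds[of 0]
    poisson_total_split[of 0]
  by linarith+

lemma poisson_cdf_Suc: "poisson_cdf L (Suc k) = poisson_cdf L k + poisson_nat L (Suc k)"
  by (simp add: poisson_cdf_def)

lemma poisson_partial_expect_Suc:
  "poisson_partial_expect L H (Suc k) = poisson_partial_expect L H k + poisson_nat L (Suc k) * H (Suc k)"
  by (simp add: poisson_partial_expect_def)

lemma poisson_tail_Suc: "poisson_tail L k = poisson_nat L (Suc k) + poisson_tail L (Suc k)"
  using poisson_total_split[of k] poisson_total_split[of "Suc k"] poisson_cdf_Suc[of k] by linarith

lemma poisson_tail_le: "real k * poisson_tail L k \<le> L * (poisson_tail L k + poisson_nat L k)"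
proof -
  have summable_from: "summable (\<lambda>m. poisson_nat L (m + j))" for j
    using summable_ignore_initial_segment[OF summable_poisson_nat[of L], of j] by simp
  have "real k * poisson_tail L k = (\<Sum>m. real k * poisson_nat L (m + Suc k))"
    unfolding poisson_tail_def using suminf_mult[OF summable_from[of "Suc k"], of "real k"] by simp
  also have "\<dots> \<le> (\<Sum>m. L * poisson_nat L (m + k))"
  proof (rule suminf_le)
    fix m
    have "real k * poisson_nat L (Suc (m + k)) \<le> real (Suc (m + k)) * poisson_nat L (Suc (m + k))"
      using poisson_nat_nonneg[of L] L by (intro mult_right_mono) auto
    then show "real k * poisson_nat L (m + Suc k) \<le> L * poisson_nat L (m + k)"
      by (simp add: poisson_nat_Suc del: of_nat_Suc)
  qed (intro summable_mult summable_from)+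
  also have "\<dots> = L * (poisson_tail L k + poisson_nat L k)"
    unfolding poisson_tail_def using suminf_split_head[OF summable_from, of k] suminf_mult[OF summable_from]
    by simp
  finally show ?thesis .
qed

lemma poisson_cdf_le: "L * poisson_cdf L k \<le> real (Suc k) * poisson_cdf L (Suc k)"
proof (induction k)
  case 0
  show ?case
    using poisson_nat_Suc[of 0 L] poisson_nat_nonneg[of L] L by (simp add: poisson_cdf_def)
next
  case (Suc k)
  have "L * poisson_cdf L (Suc k) = L * poisson_cdf L k + L * poisson_nat L (Suc k)"
    by (simp add: poisson_cdf_Suc algebra_simps)
  also have "\<dots> \<le> real (Suc k) * poisson_cdf L (Suc k) + real (Suc (Suc k)) * poisson_nat L (Suc (Suc k))"
    using Suc.IH poisson_nat_Suc[of "Suc k" L] by simp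
  also have "\<dots> \<le> real (Suc (Suc k)) * poisson_cdf L (Suc (Suc k))"
    using poisson_cdf_bounds(1)[of "Suc k"] by (simp add: poisson_cdf_Suc[of "Suc k"] algebra_simps)
  finally show ?case .
qed

lemma stein_sol_increment: "\<bar>stein_sol L H (Suc j) - stein_sol L H j\<bar> \<le> 1 / L"
proof -
  have "stein_sol L H (Suc j) - stein_sol L H j =
     (poisson_partial_expect L H j + poisson_nat L (Suc j) * H (Suc j)
        - poisson_expect L H * (poisson_cdf L j + poisson_nat L (Suc j))) / (L * poisson_nat L (Suc j))
     - (poisson_partial_expect L H j - poisson_expect L H * poisson_cdf L j) / (L * poisson_nat L j)"
    unfolding stein_sol_def poisson_partial_expect_Suc poisson_cdf_Suc ..
  also have "\<bar>\<dots>\<bar> \<le> 1 / L"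
  proof (rule stein_increment_bound[where k = "real (Suc j)" and u = "poisson_tail L (Suc j)"
        and y = "poisson_tail_expect L H (Suc j)"])
    show "L * poisson_nat L j = real (Suc j) * poisson_nat L (Suc j)"
      using poisson_nat_Suc[of j L] by simp
    show "real (Suc j) * poisson_tail L (Suc j) \<le> L * (poisson_tail L (Suc j) + poisson_nat L (Suc j))"
      by (rule poisson_tail_le)
    show "L * poisson_cdf L j \<le> real (Suc j) * (poisson_cdf L j + poisson_nat L (Suc j))"
      using poisson_cdf_le[of j] by (simp add: poisson_cdf_Suc)
    show "poisson_expect L H = poisson_partial_expect L H j + poisson_nat L (Suc j) * H (Suc j)
        + poisson_tail_expect L H (Suc j)"
      using poisson_expect_split[of "Suc j"] by (simp add: poisson_partial_expect_Suc)
    show "poisson_cdf L j + poisson_nat L (Suc j) + poisson_tail L (Suc j) = 1"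
      using poisson_total_split[of "Suc j"] by (simp add: poisson_cdf_Suc)
  qed (use L poisson_nat_pos poisson_cdf_bounds poisson_tail_nonneg poisson_partial_expect_bounds
      poisson_tail_expect_bounds H_nonneg H_le_1 in auto)
  finally show ?thesis .
qed

lemma stein_sol_0: "L * stein_sol L H 0 = H 0 - poisson_expect L H"
  using L poisson_nat_pos[OF L, of 0]
  by (simp add: stein_sol_def poisson_partial_expect_def poisson_cdf_def field_simps)

lemma stein_sol_Suc:
  "L * stein_sol L H (Suc j) - real (Suc j) * stein_sol L H j = H (Suc j) - poisson_expect L H"
proof -
  have pos: "poisson_nat L (Suc j) > 0"
    using L by (rule poisson_nat_pos)
  have "real (Suc j) * stein_sol L H j
      = (poisson_partial_expect L H j - poisson_expect L H * poisson_cdf L j) / poisson_nat L (Suc j)"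
    using L pos poisson_nat_Suc[of j L, symmetric]
    by (simp add: stein_sol_def field_simps del: of_nat_Suc)
  moreover have "L * stein_sol L H (Suc j) =
      (poisson_partial_expect L H (Suc j) - poisson_expect L H * poisson_cdf L (Suc j)) / poisson_nat L (Suc j)"
    using L pos by (simp add: stein_sol_def)
  ultimately have "L * stein_sol L H (Suc j) - real (Suc j) * stein_sol L H j
      = (poisson_nat L (Suc j) * H (Suc j) - poisson_expect L H * poisson_nat L (Suc j)) / poisson_nat L (Suc j)"
    by (simp add: diff_divide_distrib[symmetric] poisson_partial_expect_Suc poisson_cdf_Suc algebra_simps)
  also have "\<dots> = H (Suc j) - poisson_expect L H"
    using pos by (simp add: field_simps)
  finally show ?thesis .
qed

lemma poisson_tail_ratio_Suc:
  "poisson_tail L (Suc k) * poisson_nat L k \<le> poisson_tail L k * poisson_nat L (Suc k)"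
proof -
  have "real (Suc k) * poisson_tail L (Suc k) \<le> L * poisson_tail L k"
    using poisson_tail_le[of "Suc k"] poisson_tail_Suc[of k] by (simp add: add.commute)
  then have "real (Suc k) * poisson_tail L (Suc k) * poisson_nat L k \<le> L * poisson_tail L k * poisson_nat L k"
    using poisson_nat_nonneg[of L k] L by (intro mult_right_mono) auto
  also have "\<dots> = poisson_tail L k * (L * poisson_nat L k)"
    by simp
  also have "\<dots> = real (Suc k) * (poisson_tail L k * poisson_nat L (Suc k))"
    by (simp only: poisson_nat_Suc[symmetric] ac_simps)
  finally show ?thesis
    by (simp only: mult.assoc mult_le_cancel_left_pos of_nat_0_less_iff zero_less_Suc)
qed

lemma poisson_tail_ratio: "poisson_tail L k * poisson_nat L 0 \<le> poisson_nat L k"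
proof -
  have "poisson_tail L k * poisson_nat L 0 \<le> poisson_tail L 0 * poisson_nat L k"
  proof (induction k)
    case (Suc k)
    have "(poisson_tail L (Suc k) * poisson_nat L 0) * poisson_nat L k
        = (poisson_tail L (Suc k) * poisson_nat L k) * poisson_nat L 0"
      by simp
    also have "\<dots> \<le> (poisson_tail L k * poisson_nat L (Suc k)) * poisson_nat L 0"
      using poisson_tail_ratio_Suc[of k] poisson_nat_nonneg[of L 0] L by (intro mult_right_mono) auto
    also have "\<dots> = (poisson_tail L k * poisson_nat L 0) * poisson_nat L (Suc k)"
      by simp
    also have "\<dots> \<le> (poisson_tail L 0 * poisson_nat L k) * poisson_nat L (Suc k)"
      using Suc.IH poisson_nat_nonneg[of L "Suc k"] L by (intro mult_right_mono) auto
    finally show ?case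
      using poisson_nat_pos[OF L, of k] by (simp add: ac_simps)
  qed simp
  also have "\<dots> \<le> poisson_nat L k"
    using poisson_total_split[of 0] poisson_cdf_bounds(1)[of 0] poisson_tail_nonneg[of 0]
      poisson_nat_nonneg[of L k] L
    by (intro mult_left_le_one_le) auto
  finally show ?thesis .
qed

lemma stein_sol_bound: "\<bar>stein_sol L H k\<bar> \<le> 1 / (L * poisson_nat L 0)"
proof -
  define S R F U where "S = poisson_partial_expect L H k" and "R = poisson_tail_expect L H k"
    and "F = poisson_cdf L k" and "U = poisson_tail L k"
  have pk: "poisson_nat L k > 0" and p0: "poisson_nat L 0 > 0"
    using L by (simp_all add: poisson_nat_pos)
  have F: "0 \<le> F" "F \<le> 1" and S: "0 \<le> S" "S \<le> F" and R: "0 \<le> R" "R \<le> U" and U: "U = 1 - F"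
    using poisson_cdf_bounds[of k] poisson_partial_expect_bounds[of k] poisson_tail_expect_bounds[of k]
      poisson_total_split[of k]
    unfolding S_def R_def F_def U_def by auto
  have "poisson_partial_expect L H k - poisson_expect L H * poisson_cdf L k = S * U - R * F"
    unfolding poisson_expect_split[of k] S_def[symmetric] R_def[symmetric] F_def[symmetric] U
    by (simp add: algebra_simps)
  moreover have "0 \<le> S * U" "S * U \<le> U" "0 \<le> R * F" "R * F \<le> R"
    using F S R U by (simp_all add: mult_left_le_one_le mult_left_le)
  moreover have "U \<le> poisson_nat L k / poisson_nat L 0"
    using poisson_tail_ratio[of k] p0 unfolding U_def by (simp add: pos_le_divide_eq)
  ultimately have "\<bar>poisson_partial_expect L H k - poisson_expect L H * poisson_cdf L k\<bar>
      \<le> poisson_nat L k / poisson_nat L 0"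
    using R by linarith
  then show ?thesis
    using L pk p0 by (simp add: stein_sol_def abs_divide field_simps)
qed

end

lemma translated_poisson_stein_solution:
  fixes L :: real and h :: "int \<Rightarrow> real" and \<gamma> :: int
  assumes L: "L > 0" and h_nonneg: "\<And>j. 0 \<le> h j" and h_le_1: "\<And>j. h j \<le> 1"
  obtains f where "bounded_fun f" and "\<And>j. \<bar>fdiff f j\<bar> \<le> 1 / L"
    and "\<And>j. L * f (j + 1) - real_of_int (j - \<gamma>) * f j
      = (if j < \<gamma> then 0 else h j - poisson_expect L (\<lambda>k. h (int k + \<gamma>)))"
proof
  define H where "H = (\<lambda>k. h (int k + \<gamma>))"
  have H: "\<And>k. 0 \<le> H k" "\<And>k. H k \<le> 1"
    using h_nonneg h_le_1 by (simp_all add: H_def)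
  define f where "f j = (if j \<le> \<gamma> then 0 else stein_sol L H (nat (j - \<gamma>) - 1))" for j
  have f_Suc: "f (int (Suc m) + \<gamma>) = stein_sol L H m" for m
    by (simp add: f_def del: of_nat_Suc)
  have f_Suc': "f (int (Suc m) + \<gamma> + 1) = stein_sol L H (Suc m)" for m
    using f_Suc[of "Suc m"] by (simp add: algebra_simps)
  have cases: "(j < \<gamma> \<Longrightarrow> P) \<Longrightarrow> (j = \<gamma> \<Longrightarrow> P) \<Longrightarrow> (\<And>m. j = int (Suc m) + \<gamma> \<Longrightarrow> P) \<Longrightarrow> P"
    for j :: int and P
    using int_nat_eq[of "j - \<gamma> - 1"] of_nat_Suc[of "nat (j - \<gamma> - 1)"] by (smt (verit))
  have "\<bar>f j\<bar> \<le> 1 / (L * poisson_nat L 0)" for j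
    using stein_sol_bound[of L H, OF L H] L poisson_nat_pos[OF L, of 0] by (simp add: f_def)
  then show "bounded_fun f"
    unfolding bounded_fun_def by blast
  show "\<bar>fdiff f j\<bar> \<le> 1 / L" for j
  proof (cases rule: cases[of j])
    case 2
    have "\<bar>L * stein_sol L H 0\<bar> \<le> 1"
      using stein_sol_0[of L H, OF L H] poisson_expect_bounds[of L H, OF L H] H[of 0] by linarith
    then show ?thesis
      using L f_Suc[of 0] 2 by (simp add: fdiff_def f_def abs_mult field_simps add.commute)
  next
    case (3 m)
    then show ?thesis
      using stein_sol_increment[of L H, OF L H, of m] f_Suc[of m] f_Suc'[of m] by (simp add: fdiff_def)
  qed (use L in \<open>simp add: fdiff_def f_def\<close>)
  show "L * f (j + 1) - real_of_int (j - \<gamma>) * f j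
      = (if j < \<gamma> then 0 else h j - poisson_expect L (\<lambda>k. h (int k + \<gamma>)))" for j
  proof (cases rule: cases[of j])
    case 2
    then show ?thesis
      using stein_sol_0[of L H, OF L H] f_Suc[of 0] by (simp add: H_def add.commute)
  next
    case (3 m)
    then show ?thesis
      using stein_sol_Suc[of L H, OF L H, of m] f_Suc[of m] f_Suc'[of m] by (simp add: H_def)
  qed (simp add: f_def)
qed

lemma has_sum_nn_integral_count_space:
  fixes f :: "'a \<Rightarrow> real"
  assumes nonneg: "\<And>x. 0 \<le> f x" and s: "0 \<le> s"
    and integral: "(\<integral>\<^sup>+x. ennreal (f x) \<partial>count_space A) = ennreal s"
  shows "(f has_sum s) A"
proof -
  have "has_bochner_integral (count_space A) f s"
    using nonneg s integral by (intro has_bochner_integral_nn_integral) auto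
  then have abs_summable: "Infinite_Set_Sum.abs_summable_on f A" and "infsetsum f A = s"
    unfolding abs_summable_on_def infsetsum_def by (simp_all add: has_bochner_integral_iff)
  then have "infsum f A = s"
    using infsetsum_infsum by metis
  moreover have "f summable_on A"
    using abs_summable abs_summable_equivalent[of f A] by (simp add: abs_summable_summable)
  ultimately show ?thesis
    using has_sum_infsum by metis
qed

lemma poisson_pt_shift_has_sum:
  fixes L :: real and \<psi> :: "int \<Rightarrow> real" and \<gamma> :: int
  assumes L: "L > 0" and \<psi>: "\<And>j. 0 \<le> \<psi> j" "\<And>j. \<psi> j \<le> 1"
  shows "((\<lambda>j. poisson_pt L (j - \<gamma>) * \<psi> j) has_sum poisson_expect L (\<lambda>k. \<psi> (int k + \<gamma>))) UNIV"
proof -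
  define shift where "shift k = int k + \<gamma>" for k :: nat
  have "summable (\<lambda>k. poisson_nat L k * \<psi> (shift k))"
    using \<psi> by (intro summable_poisson_weighted[OF L]) auto
  then have "((\<lambda>k. poisson_nat L k * \<psi> (shift k)) has_sum poisson_expect L (\<lambda>k. \<psi> (shift k))) UNIV"
    unfolding poisson_expect_def
    using \<psi> poisson_nat_nonneg L by (intro sums_nonneg_imp_has_sum summable_sums) auto
  then have "((\<lambda>j. poisson_pt L (j - \<gamma>) * \<psi> j) has_sum poisson_expect L (\<lambda>k. \<psi> (shift k))) (range shift)"
    by (subst has_sum_reindex) (auto simp: inj_on_def shift_def comp_def poisson_pt_of_nat)
  also have "?this \<longleftrightarrow> ((\<lambda>j. poisson_pt L (j - \<gamma>) * \<psi> j) has_sum poisson_expect L (\<lambda>k. \<psi> (shift k))) UNIV"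
  proof (rule has_sum_cong_neutral)
    fix j assume "j \<in> UNIV - range shift"
    have "j - \<gamma> < 0"
    proof (rule ccontr)
      assume "\<not> j - \<gamma> < 0"
      then have "j = shift (nat (j - \<gamma>))"
        by (simp add: shift_def)
      then show False
        using \<open>j \<in> UNIV - range shift\<close> by blast
    qed
    then show "poisson_pt L (j - \<gamma>) * \<psi> j = 0"
      by (simp add: poisson_pt_def)
  qed auto
  finally show ?thesis
    by (simp add: shift_def)
qed

lemma abs_diff_has_sum:
  fixes p q :: "'a \<Rightarrow> real"
  assumes p: "(p has_sum 1) UNIV" and q: "(q has_sum 1) UNIV"
    and A: "A = {j. q j \<le> p j}" and pA: "(p has_sum P) A" and qA: "(q has_sum Q) A"
  shows "((\<lambda>j. \<bar>p j - q j\<bar>) has_sum 2 * (P - Q)) UNIV"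
proof -
  have restrict: "((\<lambda>j. r j * indicator A j) has_sum s) UNIV" if "(r has_sum s) A" for r :: "'a \<Rightarrow> real" and s
    using that has_sum_cong_neutral[of UNIV A "\<lambda>j. r j * indicator A j" r s] by (auto simp: indicator_def)
  have "((\<lambda>j. 2 * (p j * indicator A j) + - 2 * (q j * indicator A j) + (- 1 * p j + q j)) has_sum
      (2 * P + - 2 * Q + (- 1 * 1 + 1))) UNIV"
    by (intro has_sum_add has_sum_cmult_right restrict pA qA p q)
  moreover have "(\<lambda>j. \<bar>p j - q j\<bar>)
      = (\<lambda>j. 2 * (p j * indicator A j) + - 2 * (q j * indicator A j) + (- 1 * p j + q j))"
    by (simp add: fun_eq_iff A indicator_def)
  ultimately show ?thesis
    by (simp add: right_diff_distrib)
qed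

lemma supnorm_le: "(\<And>j. \<bar>g j\<bar> \<le> C) \<Longrightarrow> supnorm g \<le> C"
  unfolding supnorm_def by (rule cSUP_least) auto

lemma abs_le_supnorm: "bounded_fun g \<Longrightarrow> \<bar>g j\<bar> \<le> supnorm g"
  unfolding supnorm_def bounded_fun_def by (auto intro!: cSUP_upper bdd_aboveI2)

lemma nonneg_if_abs_le_supnorm_fdiff:
  fixes X :: "(int \<Rightarrow> real) \<Rightarrow> real"
  assumes "\<And>f. bounded_fun f \<Longrightarrow> \<bar>X f\<bar> \<le> B * supnorm (fdiff f)"
  shows "0 \<le> B"
proof -
  define pulse where "pulse j = (if j = 0 then 1 else 0 :: real)" for j :: int
  have "bounded_fun pulse" "bounded_fun (fdiff pulse)"
    unfolding bounded_fun_def fdiff_def pulse_def by (auto intro!: exI[of _ 1])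
  then have "1 \<le> supnorm (fdiff pulse)"
    using abs_le_supnorm[of "fdiff pulse" "- 1"] by (simp add: fdiff_def pulse_def)
  moreover have "0 \<le> B * supnorm (fdiff pulse)"
    using assms \<open>bounded_fun pulse\<close> by (meson abs_ge_zero order_trans)
  ultimately show ?thesis
    by (simp add: zero_le_mult_iff)
qed

lemma measurable_sum_int:
  fixes Y :: "'i \<Rightarrow> 's \<Rightarrow> int"
  assumes "finite S" "\<And>i. i \<in> S \<Longrightarrow> Y i \<in> M \<rightarrow>\<^sub>M count_space UNIV"
  shows "(\<lambda>x. \<Sum>i\<in>S. Y i x) \<in> M \<rightarrow>\<^sub>M count_space UNIV"
  using assms
proof (induction S rule: finite_induct)
  case (insert k S)
  have "(\<lambda>x. i + (\<Sum>j\<in>S. Y j x)) \<in> M \<rightarrow>\<^sub>M count_space UNIV" for i :: int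
    using measurable_compose[OF insert.IH measurable_count_space[where f = "(+) i"]] insert.prems
    by simp
  then have "(\<lambda>x. Y k x + (\<Sum>j\<in>S. Y j x)) \<in> M \<rightarrow>\<^sub>M count_space UNIV"
    using measurable_compose_countable[where f = "\<lambda>i x. i + (\<Sum>j\<in>S. Y j x)" and g = "Y k"] insert.prems
    by simp
  with insert.hyps show ?case
    by simp
qed simp

lemma integrable_mult_bounded_comp:
  fixes Z :: "'s \<Rightarrow> real" and \<psi> :: "int \<Rightarrow> real"
  assumes Z: "integrable M Z" and W: "W \<in> M \<rightarrow>\<^sub>M count_space UNIV" and \<psi>: "bounded_fun \<psi>"
  shows "integrable M (\<lambda>x. Z x * \<psi> (W x))"
proof -
  obtain C where C: "\<And>j. \<bar>\<psi> j\<bar> \<le> C"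
    using \<psi> unfolding bounded_fun_def by blast
  show ?thesis
  proof (rule Bochner_Integration.integrable_bound)
    show "integrable M (\<lambda>x. C * Z x)"
      using Z by simp
    have "(\<lambda>x. \<psi> (W x)) \<in> borel_measurable M"
      using measurable_compose[OF W, of \<psi> borel] by simp
    then show "(\<lambda>x. Z x * \<psi> (W x)) \<in> borel_measurable M"
      using borel_measurable_integrable[OF Z] by measurable
    have "\<bar>Z x\<bar> * \<bar>\<psi> (W x)\<bar> \<le> \<bar>Z x\<bar> * C" for x
      using C by (intro mult_left_mono) auto
    moreover have "0 \<le> C"
      using C[of 0] by linarith
    ultimately show "AE x in M. norm (Z x * \<psi> (W x)) \<le> norm (C * Z x)"
      by (simp add: abs_mult mult.commute)
  qed
qed

context prob_space
begin

lemma integrable_bounded_comp: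
  "W \<in> M \<rightarrow>\<^sub>M count_space UNIV \<Longrightarrow> bounded_fun \<psi> \<Longrightarrow> integrable M (\<lambda>x. \<psi> (W x))"
  using integrable_mult_bounded_comp[where Z = "\<lambda>_. 1" and M = M] by simp

lemma measure_points_has_sum:
  fixes W :: "'a \<Rightarrow> 'b :: countable"
  assumes W: "W \<in> M \<rightarrow>\<^sub>M count_space UNIV"
  shows "((\<lambda>j. prob {x \<in> space M. W x = j}) has_sum prob {x \<in> space M. W x \<in> A}) A"
proof (rule has_sum_nn_integral_count_space)
  define X where "X j = W -` {j} \<inter> space M" for j
  have "X j \<in> events" for j
    using W unfolding X_def by measurable
  then have "emeasure M (\<Union> (X ` A)) = (\<integral>\<^sup>+j. emeasure M (X j) \<partial>count_space A)"
    by (intro emeasure_UN_countable countableI_type) (auto simp: disjoint_family_on_def X_def)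
  moreover have "\<Union> (X ` A) = {x \<in> space M. W x \<in> A}" "\<And>j. X j = {x \<in> space M. W x = j}"
    unfolding X_def by auto
  ultimately show "(\<integral>\<^sup>+j. ennreal (prob {x \<in> space M. W x = j}) \<partial>count_space A)
      = ennreal (prob {x \<in> space M. W x \<in> A})"
    by (simp add: emeasure_eq_measure)
qed simp_all

end

lemma stein_condition_sum:
  fixes Y :: "'i \<Rightarrow> 's \<Rightarrow> int" and a b :: "'i \<Rightarrow> real" and f :: "int \<Rightarrow> real"
  assumes W: "W \<in> M \<rightarrow>\<^sub>M count_space UNIV" and f: "bounded_fun f"
    and Y_int: "\<And>i. i \<in> I \<Longrightarrow> integrable M (\<lambda>x. real_of_int (Y i x))"
    and stein: "\<And>i. i \<in> I \<Longrightarrow>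
      \<bar>(\<integral>x. real_of_int (Y i x) * f (W x) \<partial>M) - (\<integral>x. real_of_int (Y i x) \<partial>M) * (\<integral>x. f (W x) \<partial>M)
        - a i * (\<integral>x. fdiff f (W x) \<partial>M)\<bar> \<le> b i * supnorm (fdiff f)"
  shows "\<bar>(\<integral>x. real_of_int (\<Sum>i\<in>I. Y i x) * f (W x) \<partial>M)
      - (\<integral>x. real_of_int (\<Sum>i\<in>I. Y i x) \<partial>M) * (\<integral>x. f (W x) \<partial>M)
      - (\<Sum>i\<in>I. a i) * (\<integral>x. fdiff f (W x) \<partial>M)\<bar> \<le> (\<Sum>i\<in>I. b i) * supnorm (fdiff f)"
proof -
  have "(\<integral>x. real_of_int (\<Sum>i\<in>I. Y i x) * f (W x) \<partial>M) = (\<Sum>i\<in>I. \<integral>x. real_of_int (Y i x) * f (W x) \<partial>M)"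
    using Y_int integrable_mult_bounded_comp[OF _ W f]
    by (simp add: sum_distrib_right Bochner_Integration.integral_sum)
  moreover have "(\<integral>x. real_of_int (\<Sum>i\<in>I. Y i x) \<partial>M) = (\<Sum>i\<in>I. \<integral>x. real_of_int (Y i x) \<partial>M)"
    using Y_int by (simp add: Bochner_Integration.integral_sum)
  ultimately have "\<bar>(\<integral>x. real_of_int (\<Sum>i\<in>I. Y i x) * f (W x) \<partial>M)
      - (\<integral>x. real_of_int (\<Sum>i\<in>I. Y i x) \<partial>M) * (\<integral>x. f (W x) \<partial>M)
      - (\<Sum>i\<in>I. a i) * (\<integral>x. fdiff f (W x) \<partial>M)\<bar>
    = \<bar>\<Sum>i\<in>I. (\<integral>x. real_of_int (Y i x) * f (W x) \<partial>M)
        - (\<integral>x. real_of_int (Y i x) \<partial>M) * (\<integral>x. f (W x) \<partial>M) - a i * (\<integral>x. fdiff f (W x) \<partial>M)\<bar>"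
    by (simp add: sum_subtractf sum_distrib_right)
  also have "\<dots> \<le> (\<Sum>i\<in>I. b i * supnorm (fdiff f))"
    by (rule order_trans[OF sum_abs sum_mono]) (rule stein)
  finally show ?thesis
    by (simp add: sum_distrib_right)
qed

context prob_space
begin

lemma stein_operator_expectation_le:
  fixes W :: "'a \<Rightarrow> int" and f :: "int \<Rightarrow> real" and lam s2 B :: real and \<gamma> :: int
  assumes W: "W \<in> M \<rightarrow>\<^sub>M count_space UNIV" and W_int: "integrable M (\<lambda>x. real_of_int (W x))"
    and f: "bounded_fun f" and fdiff_f: "\<And>j. \<bar>fdiff f j\<bar> \<le> 1 / lam"
    and mean: "expectation (\<lambda>x. real_of_int (W x)) = lam + real_of_int \<gamma>"
    and lam: "s2 \<le> lam" "0 < s2" and B: "0 \<le> B"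
    and stein: "\<bar>expectation (\<lambda>x. real_of_int (W x) * f (W x))
       - expectation (\<lambda>x. real_of_int (W x)) * expectation (\<lambda>x. f (W x))
       - s2 * expectation (\<lambda>x. fdiff f (W x))\<bar> \<le> B * supnorm (fdiff f)"
  shows "expectation (\<lambda>x. lam * f (W x + 1) - real_of_int (W x - \<gamma>) * f (W x)) \<le> (lam - s2 + B) / lam"
proof -
  have f_shift: "bounded_fun (\<lambda>j. f (j + 1))" "bounded_fun (fdiff f)"
    using f fdiff_f unfolding bounded_fun_def by blast+
  note integrable = integrable_bounded_comp[OF W f] integrable_bounded_comp[OF W f_shift(1)]
    integrable_mult_bounded_comp[OF W_int W f]
  define D where "D = expectation (\<lambda>x. fdiff f (W x))"
  have D: "D = expectation (\<lambda>x. f (W x + 1)) - expectation (\<lambda>x. f (W x))"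
    unfolding D_def fdiff_def using integrable by simp
  have "D \<le> 1 / lam"
    unfolding D_def using fdiff_f integrable_bounded_comp[OF W f_shift(2)]
    by (intro integral_le_const) (auto simp: abs_le_iff)
  then have "(lam - s2) * D \<le> (lam - s2) / lam"
    using mult_left_mono[of D "1 / lam" "lam - s2"] lam by simp
  moreover have "B * supnorm (fdiff f) \<le> B / lam"
    using mult_left_mono[OF supnorm_le[of "fdiff f", OF fdiff_f] B] by simp
  moreover have "expectation (\<lambda>x. lam * f (W x + 1) - real_of_int (W x - \<gamma>) * f (W x))
      = lam * D - (expectation (\<lambda>x. real_of_int (W x) * f (W x))
          - expectation (\<lambda>x. real_of_int (W x)) * expectation (\<lambda>x. f (W x)))"
    unfolding D mean using integrable by (simp add: left_diff_distrib algebra_simps)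
  moreover have "(lam - s2 + B) / lam = (lam - s2) / lam + B / lam"
    by (simp add: add_divide_distrib)
  ultimately show ?thesis
    using stein unfolding D_def[symmetric] by (simp add: algebra_simps)
qed

lemma integrable_stein_operator:
  fixes W :: "'a \<Rightarrow> int" and f :: "int \<Rightarrow> real"
  assumes W: "W \<in> M \<rightarrow>\<^sub>M count_space UNIV" and W_int: "integrable M (\<lambda>x. real_of_int (W x))"
    and f: "bounded_fun f"
  shows "integrable M (\<lambda>x. lam * f (W x + 1) - real_of_int (W x - \<gamma>) * f (W x))"
proof (rule Bochner_Integration.integrable_diff)
  have "bounded_fun (\<lambda>j. f (j + 1))"
    using f unfolding bounded_fun_def by blast
  then show "integrable M (\<lambda>x. lam * f (W x + 1))"
    using integrable_bounded_comp[OF W, of "\<lambda>j. f (j + 1)"] by simp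
  show "integrable M (\<lambda>x. real_of_int (W x - \<gamma>) * f (W x))"
    using W_int by (intro integrable_mult_bounded_comp[OF _ W f]) simp
qed

lemma integral_le_prob_if_le_indicator:
  assumes "integrable M g" and "S \<in> events" and "\<And>x. x \<in> space M \<Longrightarrow> g x \<le> indicator S x"
  shows "expectation g \<le> prob S"
proof -
  have "expectation g \<le> expectation (indicator S)"
    using assms by (intro integral_mono) (simp_all add: less_top[symmetric])
  then show ?thesis
    using \<open>S \<in> events\<close> by (simp add: Int_absorb2)
qed

lemma translated_poisson_stein_estimate:
  fixes W :: "'a \<Rightarrow> int" and s2 B :: real and h :: "int \<Rightarrow> real"
  defines "EW \<equiv> expectation (\<lambda>x. real_of_int (W x))"
  defines "\<gamma> \<equiv> \<lfloor>EW - s2\<rfloor>"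
  assumes W: "W \<in> M \<rightarrow>\<^sub>M count_space UNIV" and W_int: "integrable M (\<lambda>x. real_of_int (W x))"
    and stein: "\<And>f. bounded_fun f \<Longrightarrow>
      \<bar>expectation (\<lambda>x. real_of_int (W x) * f (W x)) - EW * expectation (\<lambda>x. f (W x))
        - s2 * expectation (\<lambda>x. fdiff f (W x))\<bar> \<le> B * supnorm (fdiff f)"
    and s2: "0 < s2" and h: "\<And>j. 0 \<le> h j" "\<And>j. h j \<le> 1"
  shows "expectation (\<lambda>x. h (W x)) - poisson_expect (EW - \<gamma>) (\<lambda>k. h (int k + \<gamma>))
    \<le> (EW - \<gamma> - s2 + B) / (EW - \<gamma>) + prob {x \<in> space M. W x < \<gamma>}"
proof -
  define lam where "lam = EW - \<gamma>"
  have lam: "s2 \<le> lam"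
    unfolding lam_def \<gamma>_def by linarith
  define c where "c = poisson_expect lam (\<lambda>k. h (int k + \<gamma>))"
  have c: "0 \<le> c" "c \<le> 1"
    using poisson_expect_bounds[of lam "\<lambda>k. h (int k + \<gamma>)"] h lam s2 unfolding c_def by auto
  obtain f where f: "bounded_fun f" "\<And>j. \<bar>fdiff f j\<bar> \<le> 1 / lam"
    and f_eq: "\<And>j. lam * f (j + 1) - real_of_int (j - \<gamma>) * f j = (if j < \<gamma> then 0 else h j - c)"
    using translated_poisson_stein_solution[of lam h \<gamma>] h lam s2 unfolding c_def by auto
  define r where "r j = h j - c - (lam * f (j + 1) - real_of_int (j - \<gamma>) * f j)" for j
  have r: "r j = (if j < \<gamma> then h j - c else 0)" for j
    unfolding r_def f_eq by simp
  have "\<bar>r j\<bar> \<le> 1" for j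
    using r[of j] h(1)[of j] h(2)[of j] c by auto
  then have "bounded_fun r"
    unfolding bounded_fun_def by blast
  have "expectation (\<lambda>x. h (W x))
      = c + expectation (\<lambda>x. lam * f (W x + 1) - real_of_int (W x - \<gamma>) * f (W x)) + expectation (\<lambda>x. r (W x))"
  proof -
    have "h (W x) = c + (lam * f (W x + 1) - real_of_int (W x - \<gamma>) * f (W x)) + r (W x)" for x
      by (simp add: r_def)
    then show ?thesis
      using integrable_stein_operator[OF W W_int f(1), of lam \<gamma>] integrable_bounded_comp[OF W \<open>bounded_fun r\<close>]
      by (simp add: Bochner_Integration.integral_add prob_space)
  qed
  moreover have "expectation (\<lambda>x. r (W x)) \<le> prob {x \<in> space M. W x < \<gamma>}"
  proof (rule integral_le_prob_if_le_indicator)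
    show "integrable M (\<lambda>x. r (W x))"
      using integrable_bounded_comp[OF W \<open>bounded_fun r\<close>] .
    show "{x \<in> space M. W x < \<gamma>} \<in> events"
      using W by measurable
    show "r (W x) \<le> indicator {x \<in> space M. W x < \<gamma>} x" if "x \<in> space M" for x
      using that r[of "W x"] h(2)[of "W x"] c by (simp add: indicator_def)
  qed
  moreover have "expectation (\<lambda>x. lam * f (W x + 1) - real_of_int (W x - \<gamma>) * f (W x)) \<le> (lam - s2 + B) / lam"
    using lam s2 W W_int f nonneg_if_abs_le_supnorm_fdiff[OF stein] stein[OF f(1)]
    by (intro stein_operator_expectation_le) (simp_all add: EW_def lam_def)
  ultimately show ?thesis
    unfolding c_def lam_def by linarith
qed

lemma expectation_indicator_comp:
  assumes "W \<in> M \<rightarrow>\<^sub>M count_space UNIV"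
  shows "expectation (\<lambda>x. indicator A (W x)) = prob {x \<in> space M. W x \<in> A}"
proof -
  have "expectation (\<lambda>x. indicator A (W x)) = expectation (indicator {x \<in> space M. W x \<in> A} :: 'a \<Rightarrow> real)"
    by (rule Bochner_Integration.integral_cong) (auto simp: indicator_def)
  then show ?thesis
    by (simp add: Int_absorb2)
qed

lemma translated_poisson_total_variation_eq:
  fixes W :: "'a \<Rightarrow> int" and lam :: real and \<gamma> :: int
  defines "A \<equiv> {j. poisson_pt lam (j - \<gamma>) \<le> prob {x \<in> space M. W x = j}}"
  assumes W: "W \<in> M \<rightarrow>\<^sub>M count_space UNIV" and lam: "0 < lam"
  shows "(\<Sum>\<^sub>\<infinity>j. \<bar>prob {x \<in> space M. W x = j} - poisson_pt lam (j - \<gamma>)\<bar>)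
    = 2 * (prob {x \<in> space M. W x \<in> A} - poisson_expect lam (\<lambda>k. indicator A (int k + \<gamma>)))"
proof -
  define p where "p = (\<lambda>j. prob {x \<in> space M. W x = j})"
  define q where "q = (\<lambda>j. poisson_pt lam (j - \<gamma>))"
  define c where "c = poisson_expect lam (\<lambda>k. indicator A (int k + \<gamma>))"
  have "(p has_sum 1) UNIV"
    using measure_points_has_sum[OF W, of UNIV] by (simp add: p_def prob_space)
  moreover have "(q has_sum 1) UNIV"
    using poisson_pt_shift_has_sum[OF lam, of "\<lambda>_. 1" \<gamma>]
    by (simp add: q_def poisson_expect_def suminf_poisson_nat)
  moreover have "(p has_sum prob {x \<in> space M. W x \<in> A}) A"
    unfolding p_def by (rule measure_points_has_sum[OF W])
  moreover have "(q has_sum c) A"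
    using poisson_pt_shift_has_sum[OF lam, of "indicator A" \<gamma>]
      has_sum_cong_neutral[of UNIV A "\<lambda>j. q j * indicator A j" q c]
    by (auto simp: q_def c_def indicator_def)
  ultimately show ?thesis
    using abs_diff_has_sum[of p q A] infsumI unfolding A_def p_def q_def c_def by blast
qed

lemma translated_poisson_total_variation_bound:
  fixes W :: "'a \<Rightarrow> int" and s2 B :: real
  defines "EW \<equiv> expectation (\<lambda>x. real_of_int (W x))"
  defines "\<delta> \<equiv> EW - s2 - real_of_int \<lfloor>EW - s2\<rfloor>"
  assumes W: "W \<in> M \<rightarrow>\<^sub>M count_space UNIV" and W_int: "integrable M (\<lambda>x. real_of_int (W x))"
    and stein: "\<And>f. bounded_fun f \<Longrightarrow>
      \<bar>expectation (\<lambda>x. real_of_int (W x) * f (W x)) - EW * expectation (\<lambda>x. f (W x))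
        - s2 * expectation (\<lambda>x. fdiff f (W x))\<bar> \<le> B * supnorm (fdiff f)"
    and s2: "0 < s2"
  shows "(\<Sum>\<^sub>\<infinity>j. \<bar>prob {x \<in> space M. W x = j} - TP EW s2 j\<bar>)
    \<le> 2 / (s2 + \<delta>) * (\<delta> + B) + 2 * prob {x \<in> space M. real_of_int (W x) < EW - s2}"
proof -
  define \<gamma> where "\<gamma> = \<lfloor>EW - s2\<rfloor>"
  define lam where "lam = s2 + \<delta>"
  have lam: "lam = EW - \<gamma>" "0 < lam"
    using s2 unfolding lam_def \<delta>_def \<gamma>_def by linarith+
  define A where "A = {j. poisson_pt lam (j - \<gamma>) \<le> prob {x \<in> space M. W x = j}}"
  have "TP EW s2 = (\<lambda>j. poisson_pt lam (j - \<gamma>))"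
    by (simp add: fun_eq_iff TP_def tp_lambda_def tp_delta_def tp_gamma_def lam_def \<delta>_def \<gamma>_def)
  then have "(\<Sum>\<^sub>\<infinity>j. \<bar>prob {x \<in> space M. W x = j} - TP EW s2 j\<bar>)
      = 2 * (prob {x \<in> space M. W x \<in> A} - poisson_expect lam (\<lambda>k. indicator A (int k + \<gamma>)))"
    using translated_poisson_total_variation_eq[OF W lam(2)] by (simp add: A_def)
  also have "\<dots> \<le> 2 * ((lam - s2 + B) / lam + prob {x \<in> space M. W x < \<gamma>})"
    using mult_left_mono[OF translated_poisson_stein_estimate[OF W W_int stein[unfolded EW_def] s2,
        of "indicator A"], of 2]
    unfolding expectation_indicator_comp[OF W] lam(1) \<gamma>_def EW_def by simp
  also have "prob {x \<in> space M. W x < \<gamma>} \<le> prob {x \<in> space M. real_of_int (W x) < EW - s2}"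
  proof (rule finite_measure_mono)
    show "{x \<in> space M. real_of_int (W x) < EW - s2} \<in> events"
      using W by measurable
  qed (auto simp: \<gamma>_def less_floor_iff)
  finally show ?thesis
    by (simp add: lam_def add_divide_distrib)
qed

end

theorem lemma2p2:
  fixes M :: "'s measure" and n :: nat
    and Y :: "nat \<Rightarrow> 's \<Rightarrow> int" and a b :: "nat \<Rightarrow> real"
  assumes "prob_space M"
    and meas: "\<And>i. i \<in> {1..n} \<Longrightarrow> Y i \<in> M \<rightarrow>\<^sub>M count_space UNIV"
    and int: "\<And>i. i \<in> {1..n} \<Longrightarrow> integrable M (\<lambda>x. real_of_int (Y i x))"
    and stein: "\<And>f i. bounded_fun f \<Longrightarrow> i \<in> {1..n} \<Longrightarrow>
       \<bar>(\<integral>x. real_of_int (Y i x) * f (\<Sum>k=1..n. Y k x) \<partial>M)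
         - (\<integral>x. real_of_int (Y i x) \<partial>M) * (\<integral>x. f (\<Sum>k=1..n. Y k x) \<partial>M)
         - a i * (\<integral>x. fdiff f (\<Sum>k=1..n. Y k x) \<partial>M)\<bar>
       \<le> b i * supnorm (fdiff f)"
    and pos: "(\<Sum>i=1..n. a i) > 0"
  shows "(let W = (\<lambda>x. \<Sum>k=1..n. Y k x);
              EW = (\<integral>x. real_of_int (W x) \<partial>M);
              s2 = (\<Sum>i=1..n. a i);
              del = EW - s2 - real_of_int \<lfloor>EW - s2\<rfloor>;
              lam = s2 + del
          in (\<Sum>\<^sub>\<infinity>j\<in>(UNIV::int set). \<bar>measure M {x \<in> space M. W x = j} - TP EW s2 j\<bar>)
             \<le> 2 / lam * (del + (\<Sum>i=1..n. b i))
               + 2 * measure M {x \<in> space M. real_of_int (W x) < EW - s2})"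
proof -
  interpret prob_space M by fact
  let ?W = "\<lambda>x. \<Sum>k=1..n. Y k x"
  have W: "?W \<in> M \<rightarrow>\<^sub>M count_space UNIV"
    using meas by (intro measurable_sum_int) auto
  have W_int: "integrable M (\<lambda>x. real_of_int (?W x))"
    unfolding of_int_sum using int by (intro Bochner_Integration.integrable_sum) auto
  have "\<bar>expectation (\<lambda>x. real_of_int (?W x) * f (?W x))
      - expectation (\<lambda>x. real_of_int (?W x)) * expectation (\<lambda>x. f (?W x))
      - (\<Sum>i=1..n. a i) * expectation (\<lambda>x. fdiff f (?W x))\<bar> \<le> (\<Sum>i=1..n. b i) * supnorm (fdiff f)"
    if "bounded_fun f" for f
    using stein_condition_sum[where I = "{1..n}" and Y = Y, OF W that int stein[OF that]] by simp
  from translated_poisson_total_variation_bound[OF W W_int this pos]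
  show ?thesis
    by (simp add: Let_def)
qed

end
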